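(* Let $n\ge3$ and $k\ge1$. In $H_{n,k}$ the clustering coefficients are as follows. (a) The root $\mathbf r=0\ldots0$ has $c(\mathbf r)=\dfrac{(n-2)^2}{(n-1)^{k+1}-2n+3}$. (b) For each $1\le i\le k-1$, every vertex $\mathbf v=\alpha_1\ldots\alpha_i0\ldots0$ (with $k-i$ trailing zeros) with $\alpha_i\neq0$ has $c(\mathbf v)=\dfrac{(n-2)^2}{(n-1)^{k-i+1}+(n-1)^2-3n+4}$. (c) Every vertex $\mathbf p$ with all coordinates nonzero has $c(\mathbf p)=\dfrac{(n-1)^2+(2k-3)(n-1)+2-2k}{(n+k-2)(n+k-3)}$. (d) For each $1\le i\le k-1$, every vertex $\mathbf p=x_1\ldots x_k$ with $x_i=0$ and $x_j\ne0$ for all $i<j\le k$ has $c(\mathbf p)=\dfrac{(n-1)^2+(2k-2i-3)(n-1)+2+2i-2k}{(n+k-i-2)(n+k-i-3)}$.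
   Context: Let $n\ge 2$ and $k\ge 1$ be integers. $H_{n,k}$ is the simple undirected graph with vertex set $V_{n,k}=\mathbb{Z}_n^k$ (so $|V_{n,k}|=n^k$), whose vertices are written as strings $x_1x_2\ldots x_k$ with $x_j\in\mathbb{Z}_n=\{0,1,\ldots,n-1\}$. Two distinct vertices are adjacent if and only if they are related by one of the following rules. For $i=0$ the prefix $x_1\ldots x_i$ is empty, and "$0\ldots0$" denotes a string of zeros completing the word to length $k$. (R1) $x_1\ldots x_{k-1}x_k\sim x_1\ldots x_{k-1}y_k$ whenever $y_k\neq x_k$. (R2) For $0\le i\le k-2$: $x_1\ldots x_i0\ldots0\sim x_1\ldots x_ix_{i+1}\ldots x_k$ whenever $x_j\neq 0$ for all $i+1\le j\le k$. (R3) For $1\le i\le k-1$: $x_1\ldots x_{i-1}x_i0\ldots0\sim x_1\ldots x_{i-1}y_i0\ldots0$ whenever $x_i,y_i\neq0$ and $x_i\ne y_i$. In particular, $H_{n,1}$ is the complete graph $K_n$. For a vertex $v$ of degree $\delta_v\ge2$, its clustering coefficient is $c(v)=\frac{2\epsilon_v}{\delta_v(\delta_v-1)}$, where $\epsilon_v$ is the number of edges of the graph joining two neighbours of $v$. *)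

theory Defs
  imports Complex_Main
begin

text \<open>Vertices of H_{n,k}: words x_1 ... x_k over Z_n, represented as lists of
  naturals of length k with entries < n; x_j is xs ! (j-1).\<close>

definition HV :: "nat \<Rightarrow> nat \<Rightarrow> nat list set" where
  "HV n k = {xs. length xs = k \<and> (\<forall>x\<in>set xs. x < n)}"

definition R1 :: "nat \<Rightarrow> nat list \<Rightarrow> nat list \<Rightarrow> bool" where
  "R1 k u v \<longleftrightarrow> take (k - 1) u = take (k - 1) v \<and> u ! (k - 1) \<noteq> v ! (k - 1)"

definition R2 :: "nat \<Rightarrow> nat list \<Rightarrow> nat list \<Rightarrow> bool" where
  "R2 k u v \<longleftrightarrow> (\<exists>i. i + 2 \<le> k \<and> u = take i v @ replicate (k - i) 0
      \<and> (\<forall>j. i \<le> j \<and> j < k \<longrightarrow> v ! j \<noteq> 0))"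

definition R3 :: "nat \<Rightarrow> nat list \<Rightarrow> nat list \<Rightarrow> bool" where
  "R3 k u v \<longleftrightarrow> (\<exists>i a b. 1 \<le> i \<and> i \<le> k - 1 \<and> a \<noteq> 0 \<and> b \<noteq> 0 \<and> a \<noteq> b
      \<and> u = take (i - 1) u @ [a] @ replicate (k - i) 0
      \<and> v = take (i - 1) u @ [b] @ replicate (k - i) 0)"

definition Hadj :: "nat \<Rightarrow> nat \<Rightarrow> nat list \<Rightarrow> nat list \<Rightarrow> bool" where
  "Hadj n k u v \<longleftrightarrow> u \<in> HV n k \<and> v \<in> HV n k \<and> u \<noteq> v \<and>
     (R1 k u v \<or> R2 k u v \<or> R2 k v u \<or> R3 k u v)"

definition Hnbrs :: "nat \<Rightarrow> nat \<Rightarrow> nat list \<Rightarrow> nat list set" where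
  "Hnbrs n k v = {u \<in> HV n k. Hadj n k v u}"

definition Hdeg :: "nat \<Rightarrow> nat \<Rightarrow> nat list \<Rightarrow> nat" where
  "Hdeg n k v = card (Hnbrs n k v)"

definition Hnbr_edges :: "nat \<Rightarrow> nat \<Rightarrow> nat list \<Rightarrow> nat" where
  "Hnbr_edges n k v = card {{a, b} | a b. a \<in> Hnbrs n k v \<and> b \<in> Hnbrs n k v \<and> Hadj n k a b}"

definition Hclust :: "nat \<Rightarrow> nat \<Rightarrow> nat list \<Rightarrow> real" where
  "Hclust n k v = 2 * real (Hnbr_edges n k v) / (real (Hdeg n k v) * (real (Hdeg n k v) - 1))"

end

theory Submission
  imports Defs
begin

text \<open>
  If the last nonzero letter of v is at position p (or v is the root, p = 0), the neighbours
  of v are its n - 2 siblings x_1 .. x_{p-1} y 0 .. 0 (rule R3; none for the root), which form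
  a clique, and, for m = 1 .. k - p, the (n - 1)^m words x_1 .. x_p 0 .. 0 z_1 .. z_m with all
  z_j nonzero (rules R1 and R2). Each of the latter is adjacent precisely to the n - 2 words
  that differ from it in the last letter, and none is adjacent to a sibling.

  If instead x_{p+1} .. x_k are nonzero and x_p = 0 (or p = 0), the neighbours of v are its
  n - 1 last-letter changes (a clique, rule R1) and its k - 1 - p truncations
  x_1 .. x_i 0 .. 0 with p \<le> i \<le> k - 2 (rule R2). The truncations are pairwise non-adjacent
  and adjacent to every last-letter change except the one ending in 0.

  Counting degrees, and edges by the handshake lemma, together with a geometric sum in the
  first case, gives the four formulas.
\<close>

definition R1_nth :: "nat \<Rightarrow> nat list \<Rightarrow> nat list \<Rightarrow> bool" where
  "R1_nth k u v \<longleftrightarrow> (\<forall>j<k-1. u!j = v!j) \<and> u!(k-1) \<noteq> v!(k-1)"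

definition R2_nth :: "nat \<Rightarrow> nat list \<Rightarrow> nat list \<Rightarrow> bool" where
  "R2_nth k u v \<longleftrightarrow> (\<exists>i. i+2 \<le> k \<and> (\<forall>j<i. u!j = v!j) \<and>
     (\<forall>j. i \<le> j \<longrightarrow> j < k \<longrightarrow> u!j = 0 \<and> v!j \<noteq> 0))"

definition R3_nth :: "nat \<Rightarrow> nat list \<Rightarrow> nat list \<Rightarrow> bool" where
  "R3_nth k u v \<longleftrightarrow> (\<exists>i. 1 \<le> i \<and> i < k \<and> (\<forall>j<i-1. u!j = v!j) \<and>
     u!(i-1) \<noteq> 0 \<and> v!(i-1) \<noteq> 0 \<and> u!(i-1) \<noteq> v!(i-1) \<and>
     (\<forall>j. i \<le> j \<longrightarrow> j < k \<longrightarrow> u!j = 0 \<and> v!j = 0))"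

lemma take_eq_take_iff_nth:
  "length u = k \<Longrightarrow> length v = k \<Longrightarrow> i \<le> k \<Longrightarrow> take i u = take i v \<longleftrightarrow> (\<forall>j<i. u!j = v!j)"
  by (auto simp: list_eq_iff_nth_eq min_def)

lemma eq_take_append_replicate_iff:
  assumes "length xs = k" "length ys = k" "i \<le> k"
  shows "xs = take i ys @ replicate (k-i) 0 \<longleftrightarrow>
    (\<forall>j<i. xs!j = ys!j) \<and> (\<forall>j. i \<le> j \<longrightarrow> j < k \<longrightarrow> xs!j = 0)"
proof
  assume "xs = take i ys @ replicate (k-i) 0"
  then show "(\<forall>j<i. xs!j = ys!j) \<and> (\<forall>j. i \<le> j \<longrightarrow> j < k \<longrightarrow> xs!j = 0)"
    using assms by (auto simp: nth_append)
next
  assume "(\<forall>j<i. xs!j = ys!j) \<and> (\<forall>j. i \<le> j \<longrightarrow> j < k \<longrightarrow> xs!j = 0)"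
  then show "xs = take i ys @ replicate (k-i) 0"
    by (intro nth_equalityI) (use assms in \<open>auto simp: nth_append min_def\<close>)
qed

lemma eq_take_append_Cons_replicate_iff:
  assumes "length xs = k" "length ys = k" "1 \<le> i" "i \<le> k"
  shows "xs = take (i-1) ys @ [a] @ replicate (k-i) 0 \<longleftrightarrow>
    (\<forall>j<i-1. xs!j = ys!j) \<and> xs!(i-1) = a \<and> (\<forall>j. i \<le> j \<longrightarrow> j < k \<longrightarrow> xs!j = 0)"
proof
  assume "xs = take (i-1) ys @ [a] @ replicate (k-i) 0"
  then show "(\<forall>j<i-1. xs!j = ys!j) \<and> xs!(i-1) = a \<and> (\<forall>j. i \<le> j \<longrightarrow> j < k \<longrightarrow> xs!j = 0)"
    using assms by (auto simp: nth_append nth_Cons')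
next
  assume "(\<forall>j<i-1. xs!j = ys!j) \<and> xs!(i-1) = a \<and> (\<forall>j. i \<le> j \<longrightarrow> j < k \<longrightarrow> xs!j = 0)"
  then show "xs = take (i-1) ys @ [a] @ replicate (k-i) 0"
    by (intro nth_equalityI) (use assms in \<open>auto simp: nth_append nth_Cons' min_def\<close>)
qed

lemma R1_eq_R1_nth: "length u = k \<Longrightarrow> length v = k \<Longrightarrow> R1 k u v = R1_nth k u v"
  by (simp add: R1_def R1_nth_def take_eq_take_iff_nth)

lemma R2_eq_R2_nth:
  assumes "length u = k" "length v = k"
  shows "R2 k u v = R2_nth k u v"
  unfolding R2_def R2_nth_def
proof (intro iffI; elim exE conjE)
  fix i assume "i + 2 \<le> k" "u = take i v @ replicate (k - i) 0"
    "\<forall>j. i \<le> j \<and> j < k \<longrightarrow> v!j \<noteq> 0"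
  then show "\<exists>i. i+2 \<le> k \<and> (\<forall>j<i. u!j = v!j) \<and> (\<forall>j. i \<le> j \<longrightarrow> j < k \<longrightarrow> u!j = 0 \<and> v!j \<noteq> 0)"
    using eq_take_append_replicate_iff[OF assms, of i] by (intro exI[of _ i]) auto
next
  fix i assume "i + 2 \<le> k" "\<forall>j<i. u!j = v!j" "\<forall>j. i \<le> j \<longrightarrow> j < k \<longrightarrow> u!j = 0 \<and> v!j \<noteq> 0"
  then show "\<exists>i. i + 2 \<le> k \<and> u = take i v @ replicate (k - i) 0 \<and> (\<forall>j. i \<le> j \<and> j < k \<longrightarrow> v!j \<noteq> 0)"
    using eq_take_append_replicate_iff[OF assms, of i] by (intro exI[of _ i]) auto
qed

lemma R3_eq_R3_nth:
  assumes "length u = k" "length v = k"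
  shows "R3 k u v = R3_nth k u v"
  unfolding R3_def R3_nth_def
proof (intro iffI; elim exE conjE)
  fix i a b assume "1 \<le> i" "i \<le> k - 1" "a \<noteq> 0" "b \<noteq> 0" "a \<noteq> b"
    "u = take (i - 1) u @ [a] @ replicate (k - i) 0" "v = take (i - 1) u @ [b] @ replicate (k - i) 0"
  then show "\<exists>i. 1 \<le> i \<and> i < k \<and> (\<forall>j<i-1. u!j = v!j) \<and> u!(i-1) \<noteq> 0 \<and> v!(i-1) \<noteq> 0 \<and>
      u!(i-1) \<noteq> v!(i-1) \<and> (\<forall>j. i \<le> j \<longrightarrow> j < k \<longrightarrow> u!j = 0 \<and> v!j = 0)"
    using eq_take_append_Cons_replicate_iff[OF assms(1,1), of i a]
      eq_take_append_Cons_replicate_iff[OF assms(2,1), of i b]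
    by (intro exI[of _ i]) auto
next
  fix i assume "1 \<le> i" "i < k" "\<forall>j<i-1. u!j = v!j" "u!(i-1) \<noteq> 0" "v!(i-1) \<noteq> 0"
    "u!(i-1) \<noteq> v!(i-1)" "\<forall>j. i \<le> j \<longrightarrow> j < k \<longrightarrow> u!j = 0 \<and> v!j = 0"
  then show "\<exists>i a b. 1 \<le> i \<and> i \<le> k - 1 \<and> a \<noteq> 0 \<and> b \<noteq> 0 \<and> a \<noteq> b \<and>
      u = take (i - 1) u @ [a] @ replicate (k - i) 0 \<and> v = take (i - 1) u @ [b] @ replicate (k - i) 0"
    using eq_take_append_Cons_replicate_iff[OF assms(1,1), of i "u!(i-1)"]
      eq_take_append_Cons_replicate_iff[OF assms(2,1), of i "v!(i-1)"]
    by (intro exI[of _ i] exI[of _ "u!(i-1)"] exI[of _ "v!(i-1)"]) auto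
qed

lemma HV_iff_nth: "xs \<in> HV n k \<longleftrightarrow> length xs = k \<and> (\<forall>j<k. xs!j < n)"
  unfolding HV_def by (auto simp: in_set_conv_nth) (metis nth_mem)

lemma finite_HV: "finite (HV n k)"
proof -
  have "HV n k = {xs. set xs \<subseteq> {..<n} \<and> length xs = k}"
    unfolding HV_def by auto
  then show ?thesis
    using finite_lists_length_eq[of "{..<n}" k] by simp
qed

lemma Hadj_iff_nth: "Hadj n k u v \<longleftrightarrow> u \<in> HV n k \<and> v \<in> HV n k \<and> u \<noteq> v \<and>
    (R1_nth k u v \<or> R2_nth k u v \<or> R2_nth k v u \<or> R3_nth k u v)"
  unfolding Hadj_def using R1_eq_R1_nth R2_eq_R2_nth R3_eq_R3_nth HV_def by auto

lemma Hadj_sym: "Hadj n k u v \<Longrightarrow> Hadj n k v u"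
  unfolding Hadj_iff_nth R1_nth_def R2_nth_def R3_nth_def by (auto; metis)

lemma Hadj_irrefl: "\<not> Hadj n k u u"
  unfolding Hadj_def by simp

lemma finite_Hnbrs: "finite (Hnbrs n k v)"
  unfolding Hnbrs_def using finite_HV by simp

lemma R2_nth_last:
  assumes "R2_nth k u v" shows "u!(k-1) = 0 \<and> v!(k-1) \<noteq> 0"
proof -
  obtain i where "i + 2 \<le> k" "\<forall>j. i \<le> j \<longrightarrow> j < k \<longrightarrow> u!j = 0 \<and> v!j \<noteq> 0"
    using assms unfolding R2_nth_def by blast
  moreover have "i \<le> k-1" "k-1 < k"
    using \<open>i + 2 \<le> k\<close> by auto
  ultimately show ?thesis by blast
qed

lemma R3_nth_last:
  assumes "R3_nth k u v" shows "u!(k-1) = 0 \<and> v!(k-1) = 0"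
proof -
  obtain i where "i < k" "\<forall>j. i \<le> j \<longrightarrow> j < k \<longrightarrow> u!j = 0 \<and> v!j = 0"
    using assms unfolding R3_nth_def by blast
  moreover have "i \<le> k-1" "k-1 < k"
    using \<open>i < k\<close> by auto
  ultimately show ?thesis by blast
qed

definition nonzero_words :: "nat \<Rightarrow> nat \<Rightarrow> nat list set" where
  "nonzero_words n m = {ys. length ys = m \<and> (\<forall>y\<in>set ys. 0 < y \<and> y < n)}"

lemma card_nonzero_words: "card (nonzero_words n m) = (n-1)^m"
proof -
  have "nonzero_words n m = {ys. set ys \<subseteq> {1..<n} \<and> length ys = m}"
    unfolding nonzero_words_def by auto
  then show ?thesis
    using card_lists_length_eq[of "{1..<n}" m] by simp
qed

lemma card_image_list_update:
  assumes "i < length xs"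
  shows "card ((\<lambda>c. xs[i := c]) ` C) = card C"
proof (rule card_image, rule inj_onI)
  fix c d assume "xs[i := c] = xs[i := d]"
  then have "xs[i := c] ! i = xs[i := d] ! i" by simp
  then show "c = d" using assms by simp
qed

lemma two_card_edges_eq_sum_degrees:
  assumes "finite N" and sym: "\<And>a b. R a b \<Longrightarrow> R b a" and irrefl: "\<And>a. \<not> R a a"
  shows "2 * card {{a, b} | a b. a \<in> N \<and> b \<in> N \<and> R a b} = (\<Sum>a\<in>N. card {b\<in>N. R a b})"
proof -
  define P where "P = (SIGMA a:N. {b\<in>N. R a b})"
  define e where "e = (\<lambda>(a::'a, b::'a). {a, b})"
  have "finite P"
    unfolding P_def using assms(1) by auto
  have edges: "{{a, b} | a b. a \<in> N \<and> b \<in> N \<and> R a b} = e ` P"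
    unfolding P_def e_def by auto
  have fibre: "card {x\<in>P. e x = E} = 2" if E: "E \<in> e ` P" for E
  proof -
    obtain a b where ab: "(a, b) \<in> P" "E = {a, b}"
      using E unfolding e_def by auto
    then have "a \<noteq> b" "{x\<in>P. e x = E} = {(a, b), (b, a)}"
      using irrefl sym unfolding P_def e_def by (auto simp: doubleton_eq_iff)
    then show ?thesis by simp
  qed
  have "P = (\<Union>E\<in>e ` P. {x\<in>P. e x = E})" by auto
  then have "card P = card (\<Union>E\<in>e ` P. {x\<in>P. e x = E})" by simp
  also have "\<dots> = (\<Sum>E\<in>e ` P. card {x\<in>P. e x = E})"
    by (rule card_UN_disjoint) (use \<open>finite P\<close> in auto)
  also have "\<dots> = 2 * card (e ` P)"
    using fibre by simp
  finally show ?thesis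
    using edges assms(1) unfolding P_def by simp
qed

locale zero_tail_vertex =
  fixes n k :: nat and v :: "nat list" and p :: nat
  assumes n_ge_3: "n \<ge> 3" and v_HV: "v \<in> HV n k" and p_less: "p < k"
    and before_tail_nonzero: "p = 0 \<or> v!(p-1) \<noteq> 0"
    and tail_zero: "\<And>j. p \<le> j \<Longrightarrow> j < k \<Longrightarrow> v!j = 0"
begin

definition siblings :: "nat list set" where
  "siblings = (if p = 0 then {} else (\<lambda>c. v[p-1 := c]) ` ({1..<n} - {v!(p-1)}))"

definition tail_fills :: "nat \<Rightarrow> nat list set" where
  "tail_fills m = {b \<in> HV n k. (\<forall>j<p. b!j = v!j) \<and> (\<forall>j. p \<le> j \<longrightarrow> j < k-m \<longrightarrow> b!j = 0) \<and>
     (\<forall>j. k-m \<le> j \<longrightarrow> j < k \<longrightarrow> b!j \<noteq> 0)}"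

definition fills :: "nat list set" where
  "fills = (\<Union>m\<in>{1..k-p}. tail_fills m)"

lemma length_v: "length v = k" and v_less: "j < k \<Longrightarrow> v!j < n"
  using v_HV by (auto simp: HV_iff_nth)

lemma v_last: "v!(k-1) = 0"
  using tail_zero p_less by simp

lemma siblings_cases:
  assumes "a \<in> siblings"
  obtains c where "p \<noteq> 0" "c \<in> {1..<n} - {v!(p-1)}" "a = v[p-1 := c]"
proof -
  have "p \<noteq> 0"
    using assms unfolding siblings_def by (auto split: if_splits)
  moreover have "a \<in> (\<lambda>c. v[p-1 := c]) ` ({1..<n} - {v!(p-1)})"
    using assms calculation unfolding siblings_def by simp
  ultimately show ?thesis
    using that by blast
qed

lemma R3_nth_siblings:
  assumes "p \<noteq> 0" "c \<noteq> 0" "d \<noteq> 0" "c \<noteq> d"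
  shows "R3_nth k (v[p-1 := c]) (v[p-1 := d])"
  unfolding R3_nth_def
  by (rule exI[of _ p]) (use assms p_less tail_zero length_v in \<open>auto simp: nth_list_update\<close>)

lemma R1_R2_nth_imp_fill:
  assumes b_HV: "b \<in> HV n k" and rules: "R1_nth k v b \<or> R2_nth k v b"
  shows "b \<in> fills"
  using rules
proof
  assume "R1_nth k v b"
  then have "b \<in> tail_fills 1"
    unfolding tail_fills_def R1_nth_def using b_HV p_less tail_zero v_last
    by (auto simp: le_Suc_eq dest: le_antisym)
  then show ?thesis
    using p_less unfolding fills_def by auto
next
  assume "R2_nth k v b"
  then obtain i where i: "i + 2 \<le> k" "\<forall>j<i. v!j = b!j"
    "\<forall>j. i \<le> j \<longrightarrow> j < k \<longrightarrow> v!j = 0 \<and> b!j \<noteq> 0"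
    unfolding R2_nth_def by blast
  have "p \<le> i"
    using i(3)[rule_format, of "p-1"] before_tail_nonzero p_less by (cases "p \<le> i") auto
  then have "b \<in> tail_fills (k-i)"
    unfolding tail_fills_def using b_HV i tail_zero by auto
  then show ?thesis
    unfolding fills_def using \<open>p \<le> i\<close> i(1) by (intro UN_I[of "k-i"]) auto
qed

lemma R3_nth_imp_sibling:
  assumes b_HV: "b \<in> HV n k" and "R3_nth k v b"
  shows "b \<in> siblings"
proof -
  obtain i where i: "1 \<le> i" "i < k" "\<forall>j<i-1. v!j = b!j" "v!(i-1) \<noteq> 0" "b!(i-1) \<noteq> 0"
    "v!(i-1) \<noteq> b!(i-1)" "\<forall>j. i \<le> j \<longrightarrow> j < k \<longrightarrow> v!j = 0 \<and> b!j = 0"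
    using assms(2) unfolding R3_nth_def by blast
  have length_b: "length b = k" and b_less: "\<And>j. j < k \<Longrightarrow> b!j < n"
    using b_HV by (auto simp: HV_iff_nth)
  have "i = p"
  proof (rule antisym)
    show "i \<le> p"
      using tail_zero[of "i-1"] i by (cases "i \<le> p") auto
    show "p \<le> i"
      using i(7)[rule_format, of "p-1"] before_tail_nonzero p_less by (cases "p \<le> i") auto
  qed
  have "b = v[p-1 := b!(p-1)]"
    by (rule nth_equalityI)
      (use i \<open>i = p\<close> length_b length_v tail_zero in \<open>auto simp: nth_list_update nat_neq_iff\<close>)
  moreover have "b!(p-1) \<in> {1..<n} - {v!(p-1)}"
    using b_less[of "p-1"] i \<open>i = p\<close> by auto
  ultimately show ?thesis
    unfolding siblings_def using \<open>i = p\<close> i by auto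
qed

lemma Hnbrs_subset: "Hnbrs n k v \<subseteq> siblings \<union> fills"
proof
  fix b assume "b \<in> Hnbrs n k v"
  then have b_HV: "b \<in> HV n k" and
      rules: "R1_nth k v b \<or> R2_nth k v b \<or> R2_nth k b v \<or> R3_nth k v b"
    unfolding Hnbrs_def Hadj_iff_nth by auto
  have "\<not> R2_nth k b v"
    using R2_nth_last[of k b v] v_last by blast
  then show "b \<in> siblings \<union> fills"
    using rules R1_R2_nth_imp_fill[OF b_HV] R3_nth_imp_sibling[OF b_HV] by blast
qed

lemma siblings_subset_Hnbrs: "siblings \<subseteq> Hnbrs n k v"
proof
  fix b assume "b \<in> siblings"
  then obtain c where c: "p \<noteq> 0" "c \<in> {1..<n} - {v!(p-1)}" "b = v[p-1 := c]"
    by (rule siblings_cases)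
  have "R3_nth k (v[p-1 := v!(p-1)]) b"
    using R3_nth_siblings[of "v!(p-1)" c] c before_tail_nonzero by auto
  then have "R3_nth k v b" by simp
  moreover have "b!(p-1) \<noteq> v!(p-1)"
    using c length_v p_less by simp
  moreover have "b \<in> HV n k"
    using c length_v p_less v_HV by (auto simp: HV_iff_nth nth_list_update)
  ultimately show "b \<in> Hnbrs n k v"
    unfolding Hnbrs_def Hadj_iff_nth using v_HV by fastforce
qed

lemma fills_subset_Hnbrs: "fills \<subseteq> Hnbrs n k v"
proof
  fix b assume "b \<in> fills"
  then obtain m where m: "1 \<le> m" "m \<le> k-p" "b \<in> tail_fills m"
    unfolding fills_def by auto
  then have b_HV: "b \<in> HV n k" and b_tail: "\<forall>j. k-m \<le> j \<longrightarrow> j < k \<longrightarrow> b!j \<noteq> 0"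
    unfolding tail_fills_def by auto
  have b_before: "\<forall>j<k-m. v!j = b!j"
  proof (intro allI impI)
    fix j assume "j < k-m"
    then show "v!j = b!j"
      using m tail_zero[of j] unfolding tail_fills_def by (cases "j < p") auto
  qed
  have "k-m \<le> k-1"
    using m by simp
  then have "b \<noteq> v"
    using b_tail[rule_format, of "k-1"] p_less v_last by auto
  moreover have "R1_nth k v b \<or> R2_nth k v b"
  proof (cases "m = 1")
    case True
    then show ?thesis
      unfolding R1_nth_def using b_before b_tail v_last m by auto
  next
    case False
    then have "R2_nth k v b"
      unfolding R2_nth_def using b_before b_tail tail_zero m
      by (intro exI[of _ "k-m"]) auto
    then show ?thesis ..
  qed
  ultimately show "b \<in> Hnbrs n k v"
    unfolding Hnbrs_def Hadj_iff_nth using b_HV v_HV by auto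
qed

lemma Hnbrs_eq: "Hnbrs n k v = siblings \<union> fills"
  using Hnbrs_subset siblings_subset_Hnbrs fills_subset_Hnbrs by blast

lemma finite_siblings: "finite siblings"
  and finite_fills: "finite fills"
  using finite_Hnbrs[of n k v] unfolding Hnbrs_eq by auto

lemma card_siblings: "card siblings = (if p = 0 then 0 else n - 2)"
proof (cases "p = 0")
  case True
  then show ?thesis
    unfolding siblings_def by simp
next
  case False
  then have "v!(p-1) \<in> {1..<n}"
    using before_tail_nonzero v_less[of "p-1"] p_less by auto
  then have "card ({1..<n} - {v!(p-1)}) = n - 2" by simp
  then show ?thesis
    using False card_image_list_update[of "p-1" v] length_v p_less unfolding siblings_def by simp
qed

lemma tail_fills_eq_image:
  assumes "m \<le> k - p"
  shows "tail_fills m = (\<lambda>ys. take p v @ replicate (k-m-p) 0 @ ys) ` nonzero_words n m"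
proof -
  have nth_eq: "(take p v @ replicate (k-m-p) 0 @ ys) ! j =
      (if j < p then v!j else if j < k-m then 0 else ys!(j-(k-m)))" for ys j
    using assms length_v p_less by (auto simp: nth_append min_def)
  show ?thesis
  proof (intro set_eqI iffI)
    fix b assume b: "b \<in> tail_fills m"
    then have length_b: "length b = k" and b_less: "\<forall>j<k. b!j < n"
      and b_tail: "\<forall>j. k-m \<le> j \<longrightarrow> j < k \<longrightarrow> b!j \<noteq> 0"
      unfolding tail_fills_def HV_iff_nth by auto
    have "drop (k-m) b \<in> nonzero_words n m"
      unfolding nonzero_words_def using length_b b_less b_tail assms
      by (auto simp: in_set_conv_nth)
    moreover have "b = take p v @ replicate (k-m-p) 0 @ drop (k-m) b"
      by (rule nth_equalityI) (use b assms length_v nth_eq in \<open>auto simp: tail_fills_def HV_iff_nth\<close>)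
    ultimately show "b \<in> (\<lambda>ys. take p v @ replicate (k-m-p) 0 @ ys) ` nonzero_words n m"
      by blast
  next
    fix b assume "b \<in> (\<lambda>ys. take p v @ replicate (k-m-p) 0 @ ys) ` nonzero_words n m"
    then obtain ys where ys: "length ys = m" "\<forall>y\<in>set ys. 0 < y \<and> y < n"
      and b: "b = take p v @ replicate (k-m-p) 0 @ ys"
      unfolding nonzero_words_def by auto
    have ys_nth: "0 < ys!i \<and> ys!i < n" if "i < m" for i
      using ys that by auto
    have b_nth: "b!j = (if j < p then v!j else if j < k-m then 0 else ys!(j-(k-m)))" for j
      using b nth_eq by simp
    show "b \<in> tail_fills m"
      unfolding tail_fills_def HV_iff_nth
    proof (intro CollectI conjI allI impI)
      show "length b = k"
        using ys b assms length_v by simp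
      fix j
      show "j < k \<Longrightarrow> b!j < n"
        using b_nth[of j] ys_nth[of "j-(k-m)"] v_less[of j] n_ge_3 by auto
      show "k-m \<le> j \<Longrightarrow> j < k \<Longrightarrow> b!j \<noteq> 0"
        using b_nth[of j] ys_nth[of "j-(k-m)"] assms by auto
    qed (use b_nth in auto)
  qed
qed

lemma card_tail_fills: "m \<le> k - p \<Longrightarrow> card (tail_fills m) = (n-1)^m"
  by (simp add: tail_fills_eq_image card_image inj_on_def card_nonzero_words)

lemma tail_fills_disjoint:
  assumes "i < j" "j \<le> k - p"
  shows "tail_fills i \<inter> tail_fills j = {}"
proof -
  have "p \<le> k-j" "k-j < k-i" "k-j < k"
    using assms by auto
  have False if "b \<in> tail_fills i" "b \<in> tail_fills j" for b
  proof -
    have "b!(k-j) = 0" "b!(k-j) \<noteq> 0"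
      using that \<open>p \<le> k-j\<close> \<open>k-j < k-i\<close> \<open>k-j < k\<close> unfolding tail_fills_def by auto
    then show False by simp
  qed
  then show ?thesis by blast
qed

lemma card_fills: "card fills = (\<Sum>m=1..k-p. (n-1)^m)"
proof -
  have "card fills = (\<Sum>m=1..k-p. card (tail_fills m))"
    unfolding fills_def
  proof (rule card_UN_disjoint)
    show "\<forall>i\<in>{1..k-p}. \<forall>j\<in>{1..k-p}. i \<noteq> j \<longrightarrow> tail_fills i \<inter> tail_fills j = {}"
      using tail_fills_disjoint by (metis Int_commute atLeastAtMost_iff nat_neq_iff)
  qed (simp_all add: tail_fills_def finite_HV)
  also have "\<dots> = (\<Sum>m=1..k-p. (n-1)^m)"
    by (simp add: card_tail_fills)
  finally show ?thesis .
qed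

lemma sibling_last:
  assumes "a \<in> siblings" shows "a!(k-1) = 0"
proof -
  obtain c where "p \<noteq> 0" "a = v[p-1 := c]"
    using assms by (rule siblings_cases)
  moreover have "p-1 \<noteq> k-1"
    using \<open>p \<noteq> 0\<close> p_less by simp
  ultimately show ?thesis
    using v_last by simp
qed

lemma fills_cases:
  assumes "b \<in> fills"
  obtains m where "1 \<le> m" "m \<le> k-p" "b \<in> HV n k" "\<forall>j<p. b!j = v!j"
    "\<forall>j. p \<le> j \<longrightarrow> j < k-m \<longrightarrow> b!j = 0" "\<forall>j. k-m \<le> j \<longrightarrow> j < k \<longrightarrow> b!j \<noteq> 0"
proof -
  obtain m where "m \<in> {1..k-p}" "b \<in> tail_fills m"
    using assms unfolding fills_def by blast
  then show thesis
    by (intro that[of m]) (auto simp: tail_fills_def)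
qed

lemma fill_last:
  assumes "b \<in> fills" shows "b!(k-1) \<noteq> 0"
proof -
  obtain m where "1 \<le> m" "\<forall>j. k-m \<le> j \<longrightarrow> j < k \<longrightarrow> b!j \<noteq> 0"
    using assms by (rule fills_cases)
  moreover have "k-m \<le> k-1" "k-1 < k"
    using \<open>1 \<le> m\<close> p_less by auto
  ultimately show ?thesis by blast
qed

lemma siblings_fills_disjoint: "siblings \<inter> fills = {}"
  using sibling_last fill_last by blast

lemma not_Hadj_sibling_fill:
  assumes a: "a \<in> siblings" and b: "b \<in> fills"
  shows "\<not> Hadj n k a b"
proof
  assume "Hadj n k a b"
  then have rules: "R1_nth k a b \<or> R2_nth k a b \<or> R2_nth k b a \<or> R3_nth k a b"
    unfolding Hadj_iff_nth by auto
  obtain c where "p \<noteq> 0" "c \<in> {1..<n} - {v!(p-1)}" "a = v[p-1 := c]"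
    using a by (rule siblings_cases)
  then have p_pos: "p \<noteq> 0" and a_p: "a!(p-1) \<noteq> 0" "a!(p-1) \<noteq> v!(p-1)"
    using p_less length_v by auto
  have "p-1 < p"
    using p_pos by simp
  then have b_p: "b!(p-1) = v!(p-1)"
    using b by (elim fills_cases) blast
  from rules show False
  proof (elim disjE)
    assume "R1_nth k a b"
    moreover have "p-1 < k-1"
      using p_pos p_less by simp
    ultimately show False
      unfolding R1_nth_def using a_p b_p by simp
  next
    assume "R2_nth k a b"
    then obtain i where i: "\<forall>j<i. a!j = b!j" "\<forall>j. i \<le> j \<longrightarrow> j < k \<longrightarrow> a!j = 0 \<and> b!j \<noteq> 0"
      unfolding R2_nth_def by blast
    show False
    proof (cases "p-1 < i")
      case True
      then show False
        using i(1) a_p b_p by simp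
    next
      case False
      then show False
        using i(2) a_p p_less by simp
    qed
  next
    assume "R2_nth k b a"
    then show False
      using R2_nth_last[of k b a] sibling_last[OF a] by simp
  next
    assume "R3_nth k a b"
    then show False
      using R3_nth_last[of k a b] fill_last[OF b] by simp
  qed
qed

lemma Hadj_sibling:
  assumes a: "a \<in> siblings"
  shows "{b \<in> Hnbrs n k v. Hadj n k a b} = siblings - {a}"
proof (intro set_eqI iffI)
  fix b assume b: "b \<in> {b \<in> Hnbrs n k v. Hadj n k a b}"
  then have "b \<notin> fills" "b \<noteq> a"
    using not_Hadj_sibling_fill[OF a] Hadj_irrefl by auto
  then show "b \<in> siblings - {a}"
    using b unfolding Hnbrs_eq by auto
next
  fix b assume b: "b \<in> siblings - {a}"
  obtain c where c: "p \<noteq> 0" "c \<in> {1..<n} - {v!(p-1)}" "a = v[p-1 := c]"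
    using a by (rule siblings_cases)
  have "b \<in> siblings"
    using b by simp
  then obtain d where d: "d \<in> {1..<n} - {v!(p-1)}" "b = v[p-1 := d]"
    by (rule siblings_cases)
  have "c \<noteq> d"
    using b c(3) d(2) by auto
  then have "R3_nth k a b"
    unfolding c(3) d(2) using c(1,2) d(1) by (intro R3_nth_siblings) auto
  moreover have "a \<in> Hnbrs n k v" "b \<in> Hnbrs n k v" "a \<noteq> b"
    using a b siblings_subset_Hnbrs by auto
  ultimately show "b \<in> {b \<in> Hnbrs n k v. Hadj n k a b}"
    using b unfolding Hadj_iff_nth Hnbrs_def by simp
qed

lemma list_update_last_fill:
  assumes a: "a \<in> fills" and y: "0 < y" "y < n"
  shows "a[k-1 := y] \<in> fills"
proof -
  obtain m where m: "1 \<le> m" "m \<le> k-p" and a_HV: "a \<in> HV n k"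
    and a_before: "\<forall>j<p. a!j = v!j" and a_zero: "\<forall>j. p \<le> j \<longrightarrow> j < k-m \<longrightarrow> a!j = 0"
    and a_tail: "\<forall>j. k-m \<le> j \<longrightarrow> j < k \<longrightarrow> a!j \<noteq> 0"
    using a by (rule fills_cases)
  have length_a: "length a = k" and a_less: "\<forall>j<k. a!j < n"
    using a_HV unfolding HV_iff_nth by auto
  have nth_eq: "a[k-1 := y] ! j = (if j = k-1 then y else a!j)" for j
    using length_a p_less by (auto simp: nth_list_update)
  have "a[k-1 := y] \<in> tail_fills m"
    unfolding tail_fills_def HV_iff_nth
  proof (intro CollectI conjI allI impI)
    show "length (a[k-1 := y]) = k"
      using length_a by simp
    fix j
    show "j < k \<Longrightarrow> a[k-1 := y] ! j < n"
      using nth_eq[of j] y a_less by auto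
    show "j < p \<Longrightarrow> a[k-1 := y] ! j = v!j"
      using nth_eq[of j] a_before p_less by auto
    show "p \<le> j \<Longrightarrow> j < k-m \<Longrightarrow> a[k-1 := y] ! j = 0"
      using nth_eq[of j] a_zero m by auto
    show "k-m \<le> j \<Longrightarrow> j < k \<Longrightarrow> a[k-1 := y] ! j \<noteq> 0"
      using nth_eq[of j] a_tail y by auto
  qed
  then show ?thesis
    unfolding fills_def using m by (intro UN_I[of m]) auto
qed

lemma Hadj_fill:
  assumes a: "a \<in> fills"
  shows "{b \<in> Hnbrs n k v. Hadj n k a b} = (\<lambda>y. a[k-1 := y]) ` ({1..<n} - {a!(k-1)})"
proof (intro set_eqI iffI)
  have length_a: "length a = k"
    using a fills_subset_Hnbrs unfolding Hnbrs_def by (auto simp: HV_iff_nth)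
  fix b assume "b \<in> {b \<in> Hnbrs n k v. Hadj n k a b}"
  then have b: "b \<in> Hnbrs n k v" "Hadj n k a b" by auto
  moreover have "b \<notin> siblings"
    using not_Hadj_sibling_fill[OF _ a] Hadj_sym[OF b(2)] by auto
  ultimately have "b \<in> fills"
    unfolding Hnbrs_eq by auto
  then have b_last: "b!(k-1) \<noteq> 0"
    by (rule fill_last)
  have length_b: "length b = k" and b_less: "b!(k-1) < n"
    using b p_less unfolding Hadj_iff_nth HV_iff_nth by auto
  have "R1_nth k a b"
    using b(2) R2_nth_last[of k a b] R2_nth_last[of k b a] R3_nth_last[of k a b] fill_last[OF a] b_last
    unfolding Hadj_iff_nth by auto
  then have "b = a[k-1 := b!(k-1)]" and "b!(k-1) \<noteq> a!(k-1)"
    unfolding R1_nth_def using length_a length_b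
    by (auto intro!: nth_equalityI simp: nth_list_update)
  then show "b \<in> (\<lambda>y. a[k-1 := y]) ` ({1..<n} - {a!(k-1)})"
    using b_last b_less by (intro image_eqI) auto
next
  have a_HV: "a \<in> HV n k" and length_a: "length a = k"
    using a fills_subset_Hnbrs unfolding Hnbrs_def by (auto simp: HV_iff_nth)
  fix b assume "b \<in> (\<lambda>y. a[k-1 := y]) ` ({1..<n} - {a!(k-1)})"
  then obtain y where "y \<in> {1..<n} - {a!(k-1)}" and b: "b = a[k-1 := y]"
    by blast
  then have y: "0 < y" "y < n" "y \<noteq> a!(k-1)"
    by auto
  have "b!(k-1) = y" "\<forall>j<k-1. b!j = a!j"
    unfolding b using length_a p_less by auto
  then have "R1_nth k a b" "a \<noteq> b"
    unfolding R1_nth_def using y by auto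
  moreover have "b \<in> Hnbrs n k v"
    unfolding b using list_update_last_fill[OF a y(1,2)] fills_subset_Hnbrs by auto
  ultimately show "b \<in> {b \<in> Hnbrs n k v. Hadj n k a b}"
    using a_HV unfolding Hnbrs_def Hadj_iff_nth by auto
qed

lemma card_Hadj_fill:
  assumes a: "a \<in> fills"
  shows "card {b \<in> Hnbrs n k v. Hadj n k a b} = n - 2"
proof -
  have "length a = k" "a!(k-1) < n"
    using a p_less fills_subset_Hnbrs unfolding Hnbrs_def HV_iff_nth by auto
  moreover have "a!(k-1) \<noteq> 0"
    using a by (rule fill_last)
  ultimately show ?thesis
    using card_image_list_update[of "k-1" a] p_less unfolding Hadj_fill[OF a] by simp
qed

lemma card_Hadj_sibling:
  assumes a: "a \<in> siblings"
  shows "card {b \<in> Hnbrs n k v. Hadj n k a b} = n - 3"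
proof -
  obtain c where "p \<noteq> 0"
    using a by (rule siblings_cases)
  then have "card siblings = n - 2"
    using card_siblings by simp
  then show ?thesis
    using a finite_siblings unfolding Hadj_sibling[OF a] by simp
qed

lemma two_Hnbr_edges: "2 * Hnbr_edges n k v = card siblings * (n-3) + card fills * (n-2)"
proof -
  let ?deg = "\<lambda>a. card {b \<in> Hnbrs n k v. Hadj n k a b}"
  have "2 * Hnbr_edges n k v = (\<Sum>a\<in>Hnbrs n k v. ?deg a)"
    unfolding Hnbr_edges_def
    by (rule two_card_edges_eq_sum_degrees) (use finite_Hnbrs Hadj_sym Hadj_irrefl in auto)
  also have "\<dots> = (\<Sum>a\<in>siblings. ?deg a) + (\<Sum>a\<in>fills. ?deg a)"
    unfolding Hnbrs_eq using finite_siblings finite_fills siblings_fills_disjoint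
    by (intro sum.union_disjoint) auto
  also have "\<dots> = card siblings * (n-3) + card fills * (n-2)"
    using card_Hadj_sibling card_Hadj_fill by simp
  finally show ?thesis .
qed

lemma Hdeg_eq: "Hdeg n k v = card siblings + card fills"
  unfolding Hdeg_def Hnbrs_eq using finite_siblings finite_fills siblings_fills_disjoint
  by (simp add: card_Un_disjoint)

lemma real_card_fills: "(real n - 2) * real (card fills) = (real n - 1)^(k-p+1) - (real n - 1)"
proof -
  have "real (card fills) = (\<Sum>m=1..k-p. (real n - 1)^m)"
    using n_ge_3 by (simp add: card_fills of_nat_diff)
  moreover have "(1 - (real n - 1)) * (\<Sum>m=1..k-p. (real n - 1)^m) = (real n - 1)^1 - (real n - 1)^Suc (k-p)"
    using p_less by (intro sum_gp_multiplied) simp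
  ultimately show ?thesis
    by (simp add: algebra_simps)
qed

lemma card_fills_ge: "n - 1 \<le> card fills"
proof -
  have "tail_fills 1 \<subseteq> fills"
    unfolding fills_def by (rule UN_upper) (use p_less in auto)
  then have "card (tail_fills 1) \<le> card fills"
    by (rule card_mono[OF finite_fills])
  then show ?thesis
    using card_tail_fills[of 1] p_less by simp
qed

lemma Hclust_root:
  assumes "p = 0"
  shows "Hclust n k v = (real n - 2)^2 / ((real n - 1)^(k+1) - 2 * real n + 3)"
proof -
  define S where "S = real (card fills)"
  have deg: "real (Hdeg n k v) = S"
    unfolding S_def using Hdeg_eq card_siblings assms by simp
  have edges: "2 * real (Hnbr_edges n k v) = (real n - 2) * S"
    unfolding S_def using arg_cong[OF two_Hnbr_edges, of real] card_siblings assms n_ge_3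
    by (simp add: of_nat_diff)
  have denom: "(real n - 1)^(k+1) - 2 * real n + 3 = (real n - 2) * (S - 1)"
    unfolding S_def using real_card_fills assms by (simp add: algebra_simps)
  have "S - 1 \<noteq> 0" "S \<noteq> 0" "real n - 2 \<noteq> 0"
    unfolding S_def using card_fills_ge n_ge_3 by auto
  then show ?thesis
    unfolding Hclust_def deg edges denom by (simp add: power2_eq_square)
qed

lemma Hclust_non_root:
  assumes "p \<noteq> 0"
  shows "Hclust n k v = (real n - 2)^2 / ((real n - 1)^(k-p+1) + (real n - 1)^2 - 3 * real n + 4)"
proof -
  define T where "T = real (card fills) + (real n - 2)"
  have deg: "real (Hdeg n k v) = T"
    unfolding T_def using Hdeg_eq card_siblings assms n_ge_3 by (simp add: of_nat_diff)
  have "2 * Hnbr_edges n k v = (n-2) * (n-3) + card fills * (n-2)"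
    using two_Hnbr_edges card_siblings assms by simp
  moreover have "real (n-2) = real n - 2" "real (n-3) = real n - 3"
    using n_ge_3 by auto
  ultimately have "2 * real (Hnbr_edges n k v) = (real n - 2) * (real n - 3) + real (card fills) * (real n - 2)"
    by (metis of_nat_add of_nat_mult of_nat_numeral)
  then have edges: "2 * real (Hnbr_edges n k v) = (real n - 2) * (T - 1)"
    unfolding T_def by (simp add: algebra_simps)
  have denom: "(real n - 1)^(k-p+1) + (real n - 1)^2 - 3 * real n + 4 = (real n - 2) * T"
    unfolding T_def using real_card_fills by (simp add: algebra_simps power2_eq_square)
  have "T - 1 \<noteq> 0" "T \<noteq> 0" "real n - 2 \<noteq> 0"
    unfolding T_def using card_fills_ge n_ge_3 by auto
  then show ?thesis
    unfolding Hclust_def deg edges denom by (simp add: power2_eq_square)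
qed

end

locale nonzero_tail_vertex =
  fixes n k :: nat and v :: "nat list" and p :: nat
  assumes n_ge_3: "n \<ge> 3" and v_HV: "v \<in> HV n k" and p_less: "p < k"
    and before_tail_zero: "p = 0 \<or> v!(p-1) = 0"
    and tail_nonzero: "\<And>j. p \<le> j \<Longrightarrow> j < k \<Longrightarrow> v!j \<noteq> 0"
begin

definition last_changes :: "nat list set" where
  "last_changes = (\<lambda>y. v[k-1 := y]) ` ({..<n} - {v!(k-1)})"

definition truncation :: "nat \<Rightarrow> nat list" where
  "truncation i = take i v @ replicate (k-i) 0"

definition truncations :: "nat list set" where
  "truncations = truncation ` {p..<k-1}"

definition last_zeroed :: "nat list" where
  "last_zeroed = v[k-1 := 0]"

lemma length_v: "length v = k" and v_less: "j < k \<Longrightarrow> v!j < n"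
  using v_HV by (auto simp: HV_iff_nth)

lemma v_last: "v!(k-1) \<noteq> 0"
  using tail_nonzero p_less by simp

lemma nth_truncation: "j < k \<Longrightarrow> i \<le> k \<Longrightarrow> truncation i ! j = (if j < i then v!j else 0)"
  unfolding truncation_def using length_v by (auto simp: nth_append min_def)

lemma truncation_HV: "i \<le> k \<Longrightarrow> truncation i \<in> HV n k"
  unfolding HV_iff_nth using nth_truncation v_less n_ge_3 length_v
  by (auto simp: truncation_def)

lemma nth_last_change: "j < k \<Longrightarrow> v[k-1 := y] ! j = (if j = k-1 then y else v!j)"
  using length_v by (auto simp: nth_list_update)

lemma last_change_HV: "y < n \<Longrightarrow> v[k-1 := y] \<in> HV n k"
  unfolding HV_iff_nth using nth_last_change v_less length_v by auto

lemma R1_nth_imp_last_change: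
  assumes b_HV: "b \<in> HV n k" and R1: "R1_nth k v b"
  shows "b \<in> last_changes"
proof -
  have length_b: "length b = k" and "b!(k-1) < n"
    using b_HV p_less by (auto simp: HV_iff_nth)
  have "b = v[k-1 := b!(k-1)]"
  proof (rule nth_equalityI)
    show "length b = length (v[k-1 := b!(k-1)])"
      using length_b length_v by simp
    fix j assume "j < length b"
    then show "b!j = v[k-1 := b!(k-1)] ! j"
      using R1 length_b nth_last_change unfolding R1_nth_def by (cases "j = k-1") auto
  qed
  moreover have "b!(k-1) \<in> {..<n} - {v!(k-1)}"
    using R1 \<open>b!(k-1) < n\<close> unfolding R1_nth_def by auto
  ultimately show ?thesis
    unfolding last_changes_def by blast
qed

lemma R2_nth_imp_truncation:
  assumes b_HV: "b \<in> HV n k" and "R2_nth k b v"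
  shows "b \<in> truncations"
proof -
  obtain i where i: "i + 2 \<le> k" "\<forall>j<i. b!j = v!j"
    "\<forall>j. i \<le> j \<longrightarrow> j < k \<longrightarrow> b!j = 0 \<and> v!j \<noteq> 0"
    using assms(2) unfolding R2_nth_def by blast
  have "p \<le> i"
  proof (rule ccontr)
    assume "\<not> p \<le> i"
    then have "i \<le> p-1" "p-1 < k" "v!(p-1) = 0"
      using p_less before_tail_zero by auto
    then show False
      using i(3) by auto
  qed
  have "length b = k"
    using b_HV by (simp add: HV_iff_nth)
  then have "b = truncation i"
    unfolding truncation_def using eq_take_append_replicate_iff[of b k v i] length_v i by auto
  then show ?thesis
    unfolding truncations_def using \<open>p \<le> i\<close> i(1) by auto
qed

lemma Hnbrs_subset: "Hnbrs n k v \<subseteq> last_changes \<union> truncations"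
proof
  fix b assume "b \<in> Hnbrs n k v"
  then have b_HV: "b \<in> HV n k" and
      rules: "R1_nth k v b \<or> R2_nth k v b \<or> R2_nth k b v \<or> R3_nth k v b"
    unfolding Hnbrs_def Hadj_iff_nth by auto
  have "\<not> R2_nth k v b" "\<not> R3_nth k v b"
    using R2_nth_last[of k v b] R3_nth_last[of k v b] v_last by auto
  then show "b \<in> last_changes \<union> truncations"
    using rules R1_nth_imp_last_change[OF b_HV] R2_nth_imp_truncation[OF b_HV] by blast
qed

lemma last_changes_subset_Hnbrs: "last_changes \<subseteq> Hnbrs n k v"
proof
  fix b assume "b \<in> last_changes"
  then obtain y where y: "y < n" "y \<noteq> v!(k-1)" and b: "b = v[k-1 := y]"
    unfolding last_changes_def by blast
  have "b!(k-1) = y" "\<forall>j<k-1. b!j = v!j"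
    unfolding b using nth_last_change p_less by auto
  then have "R1_nth k v b" "v \<noteq> b"
    unfolding R1_nth_def using y by auto
  moreover have "b \<in> HV n k"
    unfolding b by (rule last_change_HV[OF y(1)])
  ultimately show "b \<in> Hnbrs n k v"
    unfolding Hnbrs_def Hadj_iff_nth using v_HV by auto
qed

lemma truncations_subset_Hnbrs: "truncations \<subseteq> Hnbrs n k v"
proof
  fix b assume "b \<in> truncations"
  then obtain i where i: "p \<le> i" "i < k-1" and b: "b = truncation i"
    unfolding truncations_def by auto
  have "b!(k-1) = 0"
    unfolding b using nth_truncation[of "k-1" i] i by simp
  then have "v \<noteq> b"
    using v_last by auto
  moreover have "R2_nth k b v"
    unfolding R2_nth_def b
    by (rule exI[of _ i]) (use i nth_truncation tail_nonzero in auto)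
  moreover have "b \<in> HV n k"
    unfolding b using i by (intro truncation_HV) simp
  ultimately show "b \<in> Hnbrs n k v"
    unfolding Hnbrs_def Hadj_iff_nth using v_HV by auto
qed

lemma Hnbrs_eq: "Hnbrs n k v = last_changes \<union> truncations"
  using Hnbrs_subset last_changes_subset_Hnbrs truncations_subset_Hnbrs by blast

lemma card_last_changes: "card last_changes = n - 1"
proof -
  have "v!(k-1) \<in> {..<n}"
    using v_less p_less by simp
  then have "card ({..<n} - {v!(k-1)}) = n - 1" by simp
  then show ?thesis
    using card_image_list_update[of "k-1" v] length_v p_less unfolding last_changes_def by simp
qed

lemma card_truncations: "card truncations = k - 1 - p"
proof -
  have "truncation i \<noteq> truncation j" if "i \<in> {p..<k-1}" "j \<in> {p..<k-1}" "i < j" for i j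
  proof -
    have "i < k" "p \<le> i"
      using that by auto
    then have "truncation i ! i = 0" "truncation j ! i = v!i" "v!i \<noteq> 0"
      using that nth_truncation[of i i] nth_truncation[of i j] tail_nonzero[of i] by auto
    then show ?thesis
      by metis
  qed
  then have "inj_on truncation {p..<k-1}"
    by (intro linorder_inj_onI') auto
  then show ?thesis
    unfolding truncations_def by (simp add: card_image)
qed

lemma truncations_cases:
  assumes "b \<in> truncations"
  obtains "b!(k-1) = 0" "b!(k-2) = 0" "v!(k-2) \<noteq> 0" "k \<ge> 2"
proof -
  obtain i where i: "p \<le> i" "i < k-1" "b = truncation i"
    using assms unfolding truncations_def by auto
  moreover have "i \<le> k" "k-1 < k" "k-2 < k" "\<not> k-2 < i" "p \<le> k-2" "2 \<le> k"
    using i(1,2) by auto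
  ultimately show thesis
    using that nth_truncation[of "k-1" i] nth_truncation[of "k-2" i] tail_nonzero[of "k-2"] by simp
qed

lemma last_changes_truncations_disjoint: "last_changes \<inter> truncations = {}"
proof -
  have False if b: "b \<in> last_changes" "b \<in> truncations" for b
  proof -
    obtain y where "b = v[k-1 := y]"
      using b(1) unfolding last_changes_def by blast
    moreover obtain "b!(k-2) = 0" "v!(k-2) \<noteq> 0" "k \<ge> 2"
      using b(2) by (rule truncations_cases)
    ultimately show False
      using nth_last_change[of "k-2" y] by simp
  qed
  then show ?thesis by blast
qed

lemma last_zeroed_in_last_changes: "last_zeroed \<in> last_changes"
  unfolding last_changes_def last_zeroed_def using v_last n_ge_3 by auto

lemma not_Hadj_last_zeroed_truncation:
  assumes b: "b \<in> truncations"
  shows "\<not> Hadj n k last_zeroed b"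
proof
  assume "Hadj n k last_zeroed b"
  then have rules: "R1_nth k last_zeroed b \<or> R2_nth k last_zeroed b \<or> R2_nth k b last_zeroed \<or>
      R3_nth k last_zeroed b"
    unfolding Hadj_iff_nth by auto
  obtain b_last: "b!(k-1) = 0" and b_k2: "b!(k-2) = 0" and v_k2: "v!(k-2) \<noteq> 0" and "k \<ge> 2"
    using b by (rule truncations_cases)
  have z_last: "last_zeroed!(k-1) = 0" and z_k2: "last_zeroed!(k-2) = v!(k-2)"
    unfolding last_zeroed_def using nth_last_change \<open>k \<ge> 2\<close> by auto
  from rules show False
  proof (elim disjE)
    assume "R1_nth k last_zeroed b"
    then show False
      unfolding R1_nth_def using z_last b_last by simp
  next
    assume "R2_nth k last_zeroed b"
    then show False
      using R2_nth_last[of k last_zeroed b] b_last by simp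
  next
    assume "R2_nth k b last_zeroed"
    then show False
      using R2_nth_last[of k b last_zeroed] z_last by simp
  next
    assume "R3_nth k last_zeroed b"
    then obtain r where r: "1 \<le> r" "r < k" "b!(r-1) \<noteq> 0"
      "\<forall>j. r \<le> j \<longrightarrow> j < k \<longrightarrow> last_zeroed!j = 0 \<and> b!j = 0"
      unfolding R3_nth_def by blast
    have "\<not> r \<le> k-2"
      using r(4) z_k2 v_k2 \<open>k \<ge> 2\<close> by force
    then have "r - 1 = k - 2"
      using r(2) by simp
    then show False
      using r(3) b_k2 by simp
  qed
qed

lemma not_Hadj_truncations:
  assumes a: "a \<in> truncations" and b: "b \<in> truncations"
  shows "\<not> Hadj n k a b"
proof
  assume "Hadj n k a b"
  then have rules: "R1_nth k a b \<or> R2_nth k a b \<or> R2_nth k b a \<or> R3_nth k a b"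
    unfolding Hadj_iff_nth by auto
  obtain i where i: "p \<le> i" "i < k-1" "a = truncation i"
    using a unfolding truncations_def by auto
  obtain i' where i': "p \<le> i'" "i' < k-1" "b = truncation i'"
    using b unfolding truncations_def by auto
  obtain a_last: "a!(k-1) = 0"
    using a by (rule truncations_cases)
  obtain b_last: "b!(k-1) = 0"
    using b by (rule truncations_cases)
  from rules show False
  proof (elim disjE)
    assume "R1_nth k a b"
    then show False
      unfolding R1_nth_def using a_last b_last by simp
  next
    assume "R2_nth k a b"
    then show False
      using R2_nth_last[of k a b] b_last by simp
  next
    assume "R2_nth k b a"
    then show False
      using R2_nth_last[of k b a] a_last by simp
  next
    assume "R3_nth k a b"
    then obtain r where r: "r < k" "a!(r-1) \<noteq> 0" "b!(r-1) \<noteq> 0" "a!(r-1) \<noteq> b!(r-1)"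
      unfolding R3_nth_def by blast
    have "r - 1 < i" "r - 1 < i'"
      using r(2,3) i i' nth_truncation[of "r-1" i] nth_truncation[of "r-1" i'] r(1)
      by (auto split: if_splits)
    then show False
      using r(1,4) i i' nth_truncation[of "r-1" i] nth_truncation[of "r-1" i'] by auto
  qed
qed

lemma Hadj_truncation_last_change:
  assumes a: "a \<in> last_changes" "a \<noteq> last_zeroed" and b: "b \<in> truncations"
  shows "Hadj n k b a"
proof -
  obtain y where "y < n" and a_eq: "a = v[k-1 := y]"
    using a(1) unfolding last_changes_def by blast
  have "y \<noteq> 0"
    using a(2) a_eq unfolding last_zeroed_def by (cases "y = 0") simp_all
  obtain i where i: "p \<le> i" "i < k-1" and b_eq: "b = truncation i"
    using b unfolding truncations_def by auto
  have "R2_nth k b a"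
    unfolding R2_nth_def
  proof (intro exI[of _ i] conjI allI impI)
    show "i + 2 \<le> k"
      using i by simp
    fix j
    show "j < i \<Longrightarrow> b!j = a!j"
      using nth_truncation[of j i] nth_last_change[of j y] a_eq b_eq i by auto
    show "i \<le> j \<Longrightarrow> j < k \<Longrightarrow> b!j = 0"
      using nth_truncation[of j i] b_eq i by auto
    show "i \<le> j \<Longrightarrow> j < k \<Longrightarrow> a!j \<noteq> 0"
      using nth_last_change[of j y] a_eq i tail_nonzero[of j] \<open>y \<noteq> 0\<close> by auto
  qed
  moreover have "a \<in> Hnbrs n k v" "b \<in> Hnbrs n k v"
    using a b last_changes_subset_Hnbrs truncations_subset_Hnbrs by auto
  moreover have "a \<noteq> b"
    using a b last_changes_truncations_disjoint by auto
  ultimately show ?thesis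
    unfolding Hadj_iff_nth Hnbrs_def by auto
qed

lemma Hadj_last_changes:
  assumes a: "a \<in> last_changes" and b: "b \<in> last_changes" "b \<noteq> a"
  shows "Hadj n k a b"
proof -
  obtain y where y: "a = v[k-1 := y]"
    using a unfolding last_changes_def by blast
  obtain y' where y': "b = v[k-1 := y']"
    using b unfolding last_changes_def by blast
  have "y \<noteq> y'"
    using b y y' by auto
  then have "R1_nth k a b"
    unfolding R1_nth_def y y' using nth_last_change p_less by auto
  moreover have "a \<in> Hnbrs n k v" "b \<in> Hnbrs n k v"
    using a b last_changes_subset_Hnbrs by auto
  ultimately show ?thesis
    unfolding Hadj_iff_nth Hnbrs_def using b by auto
qed

lemma Hadj_last_change:
  assumes "a \<in> last_changes" "a \<noteq> last_zeroed"
  shows "{b \<in> Hnbrs n k v. Hadj n k a b} = (last_changes - {a}) \<union> truncations"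
  using Hadj_truncation_last_change[OF assms] Hadj_last_changes[OF assms(1)] Hadj_sym Hadj_irrefl
  unfolding Hnbrs_eq by blast

lemma Hadj_last_zeroed: "{b \<in> Hnbrs n k v. Hadj n k last_zeroed b} = last_changes - {last_zeroed}"
  using Hadj_last_changes[OF last_zeroed_in_last_changes] not_Hadj_last_zeroed_truncation Hadj_irrefl
  unfolding Hnbrs_eq by blast

lemma Hadj_truncation:
  assumes "a \<in> truncations"
  shows "{b \<in> Hnbrs n k v. Hadj n k a b} = last_changes - {last_zeroed}"
  using Hadj_truncation_last_change assms not_Hadj_truncations not_Hadj_last_zeroed_truncation
    Hadj_sym Hadj_irrefl
  unfolding Hnbrs_eq by blast

lemma finite_last_changes: "finite last_changes"
  and finite_truncations: "finite truncations"
  using finite_Hnbrs[of n k v] unfolding Hnbrs_eq by auto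

lemma card_last_changes_remove: "a \<in> last_changes \<Longrightarrow> card (last_changes - {a}) = n - 2"
  using finite_last_changes card_last_changes by simp

lemma card_Hadj_last_change:
  assumes "a \<in> last_changes" "a \<noteq> last_zeroed"
  shows "card {b \<in> Hnbrs n k v. Hadj n k a b} = (n-2) + (k-1-p)"
proof -
  have "card {b \<in> Hnbrs n k v. Hadj n k a b} = card ((last_changes - {a}) \<union> truncations)"
    using Hadj_last_change[OF assms] by simp
  also have "\<dots> = card (last_changes - {a}) + card truncations"
    using finite_last_changes finite_truncations last_changes_truncations_disjoint
    by (intro card_Un_disjoint) auto
  finally show ?thesis
    using card_last_changes_remove[OF assms(1)] card_truncations by simp
qed

lemma two_Hnbr_edges: "2 * Hnbr_edges n k v = (n-1) * (n-2) + 2 * (k-1-p) * (n-2)"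
proof -
  let ?deg = "\<lambda>a. card {b \<in> Hnbrs n k v. Hadj n k a b}"
  let ?others = "last_changes - {last_zeroed}"
  have "2 * Hnbr_edges n k v = (\<Sum>a\<in>Hnbrs n k v. ?deg a)"
    unfolding Hnbr_edges_def
    by (rule two_card_edges_eq_sum_degrees) (use finite_Hnbrs Hadj_sym Hadj_irrefl in auto)
  also have "\<dots> = (\<Sum>a\<in>last_changes. ?deg a) + (\<Sum>a\<in>truncations. ?deg a)"
    unfolding Hnbrs_eq using finite_last_changes finite_truncations last_changes_truncations_disjoint
    by (intro sum.union_disjoint) auto
  also have "(\<Sum>a\<in>last_changes. ?deg a) = ?deg last_zeroed + (\<Sum>a\<in>?others. ?deg a)"
    using sum.remove[OF finite_last_changes last_zeroed_in_last_changes] by simp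
  also have "\<dots> = (n-2) + (n-2) * ((n-2) + (k-1-p))"
    using card_Hadj_last_change card_last_changes_remove[OF last_zeroed_in_last_changes]
    unfolding Hadj_last_zeroed by simp
  also have "(\<Sum>a\<in>truncations. ?deg a) = (k-1-p) * (n-2)"
    using Hadj_truncation card_last_changes_remove[OF last_zeroed_in_last_changes] card_truncations
    by simp
  finally have "2 * Hnbr_edges n k v = (n-2) + (n-2) * ((n-2) + (k-1-p)) + (k-1-p) * (n-2)" .
  moreover have "n - 1 = (n-2) + 1"
    using n_ge_3 by simp
  moreover have "m + m * (m + q) + q * m = (m + 1) * m + 2 * q * m" for m q :: nat
    by (simp add: algebra_simps)
  ultimately show ?thesis
    by metis
qed

lemma Hdeg_eq: "Hdeg n k v = (n-1) + (k-1-p)"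
  unfolding Hdeg_def Hnbrs_eq using finite_last_changes finite_truncations
    last_changes_truncations_disjoint card_last_changes card_truncations
  by (simp add: card_Un_disjoint)

lemma Hclust_eq:
  "Hclust n k v = ((real n - 1)^2 + (2 * real k - 2 * real p - 3) * (real n - 1) + 2 + 2 * real p - 2 * real k) /
      ((real n + real k - real p - 2) * (real n + real k - real p - 3))"
proof -
  have diffs: "real (n-1) = real n - 1" "real (n-2) = real n - 2" "real (k-1-p) = real k - 1 - real p"
    using n_ge_3 p_less by auto
  have "2 * real (Hnbr_edges n k v) = (real n - 1) * (real n - 2) + 2 * (real k - 1 - real p) * (real n - 2)"
    using arg_cong[OF two_Hnbr_edges, of real] diffs by (metis of_nat_add of_nat_mult of_nat_numeral)
  then have num: "(real n - 1)^2 + (2 * real k - 2 * real p - 3) * (real n - 1) + 2 + 2 * real p - 2 * real k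
      = 2 * real (Hnbr_edges n k v)"
    by (simp add: algebra_simps power2_eq_square)
  have "real (Hdeg n k v) = real n + real k - real p - 2"
    using Hdeg_eq diffs by simp
  then have den: "(real n + real k - real p - 2) * (real n + real k - real p - 3)
      = real (Hdeg n k v) * (real (Hdeg n k v) - 1)"
    by simp
  show ?thesis
    unfolding Hclust_def num den ..
qed

end

theorem mainTheorem10:
  fixes n k :: nat
  assumes "n \<ge> 3" and "k \<ge> 1"
  shows
   "Hclust n k (replicate k 0) =
      (real n - 2)^2 / ((real n - 1)^(k+1) - 2 * real n + 3)
   \<and>
   (\<forall>i v. 1 \<le> i \<and> i \<le> k - 1 \<and> v \<in> HV n k \<and> v ! (i - 1) \<noteq> 0 \<and>
      (\<forall>j. i \<le> j \<and> j < k \<longrightarrow> v ! j = 0) \<longrightarrow>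
      Hclust n k v = (real n - 2)^2 / ((real n - 1)^(k-i+1) + (real n - 1)^2 - 3 * real n + 4))
   \<and>
   (\<forall>p. p \<in> HV n k \<and> (\<forall>j < k. p ! j \<noteq> 0) \<longrightarrow>
      Hclust n k p = ((real n - 1)^2 + (2 * real k - 3) * (real n - 1) + 2 - 2 * real k) /
                     ((real n + real k - 2) * (real n + real k - 3)))
   \<and>
   (\<forall>i p. 1 \<le> i \<and> i \<le> k - 1 \<and> p \<in> HV n k \<and> p ! (i - 1) = 0 \<and>
      (\<forall>j. i \<le> j \<and> j < k \<longrightarrow> p ! j \<noteq> 0) \<longrightarrow>
      Hclust n k p = ((real n - 1)^2 + (2 * real k - 2 * real i - 3) * (real n - 1) + 2 + 2 * real i - 2 * real k) /
                     ((real n + real k - real i - 2) * (real n + real k - real i - 3)))"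
proof (intro conjI allI impI)
  have "zero_tail_vertex n k (replicate k 0) 0"
    by unfold_locales (use assms in \<open>auto simp: HV_def\<close>)
  then show "Hclust n k (replicate k 0) = (real n - 2)^2 / ((real n - 1)^(k+1) - 2 * real n + 3)"
    by (rule zero_tail_vertex.Hclust_root) simp
next
  fix i v assume v: "1 \<le> i \<and> i \<le> k - 1 \<and> v \<in> HV n k \<and> v ! (i - 1) \<noteq> 0 \<and>
      (\<forall>j. i \<le> j \<and> j < k \<longrightarrow> v ! j = 0)"
  then have "zero_tail_vertex n k v i"
    using assms by unfold_locales auto
  moreover have "i \<noteq> 0"
    using v by simp
  ultimately show "Hclust n k v = (real n - 2)^2 / ((real n - 1)^(k-i+1) + (real n - 1)^2 - 3 * real n + 4)"
    by (rule zero_tail_vertex.Hclust_non_root)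
next
  fix v assume "v \<in> HV n k \<and> (\<forall>j < k. v ! j \<noteq> 0)"
  then have "nonzero_tail_vertex n k v 0"
    using assms by unfold_locales auto
  from nonzero_tail_vertex.Hclust_eq[OF this]
  show "Hclust n k v = ((real n - 1)^2 + (2 * real k - 3) * (real n - 1) + 2 - 2 * real k) /
      ((real n + real k - 2) * (real n + real k - 3))"
    by simp
next
  fix i v assume "1 \<le> i \<and> i \<le> k - 1 \<and> v \<in> HV n k \<and> v ! (i - 1) = 0 \<and>
      (\<forall>j. i \<le> j \<and> j < k \<longrightarrow> v ! j \<noteq> 0)"
  then have "nonzero_tail_vertex n k v i"
    using assms by unfold_locales auto
  then show "Hclust n k v = ((real n - 1)^2 + (2 * real k - 2 * real i - 3) * (real n - 1) + 2 + 2 * real i - 2 * real k) /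
      ((real n + real k - real i - 2) * (real n + real k - real i - 3))"
    by (rule nonzero_tail_vertex.Hclust_eq)
qed

end
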